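(* The coarse transition function $\Phi:\mathrm{Conf}\to\mathrm{Conf}$ is the left Kan extension of the fully shifted local transition function $\overline{\delta}:\mathrm{Loc}\to\mathrm{Conf}$ along the projection $\pi_2:\mathrm{Loc}\to\mathrm{Conf}$. That is, $\Phi$ is monotonic, $\overline{\delta}\Rightarrow\Phi\circ\pi_2$, and for every monotonic $F:\mathrm{Conf}\to\mathrm{Conf}$ with $\overline{\delta}\Rightarrow F\circ\pi_2$ we have $\Phi\Rightarrow F$.
   Context: A cellular automaton is given by a group $G$, a neighborhood $N\subseteq G$ (not necessarily finite), a finite set of states $Q$ and a local transition function $\delta:Q^N\to Q$. $\mathrm{Conf}$ is the set of partial functions $G\to Q$; $|c|$ is the domain (support) of $c$; $c\restriction S$ is the restriction of $c$ to $S\cap|c|$. $\mathrm{Conf}$ is partially ordered by $c\preceq c'$ iff for all $g\in|c|$, $g\in|c'|$ and $c(g)=c'(g)$. For $c\in\mathrm{Conf}$, $g\in G$, $c\blacktriangleleft g$ has support $\{h\in G\mid g\cdot h\in|c|\}$ and $(c\blacktriangleleft g)(h)=c(g\cdot h)$. $g\cdot N=\{g\cdot n\mid n\in N\}$, and $\mathrm{int}(S)=\{g\in G\mid g\cdot N\subseteq S\}$. The coarse transition function $\Phi$ maps $c$ to the configuration with support $\mathrm{int}(|c|)$ and values $\Phi(c)(g)=\delta((c\blacktriangleleft g)\restriction N)$. $\mathrm{Loc}=\bigcup_{g\in G}(\{g\}\times Q^{g\cdot N})$ is the poset with trivial order ($(g,c)\preceq(g',c')$ iff $(g,c)=(g',c')$);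 $\overline{\delta}(g,c)$ is the configuration with support $\{g\}$ and value $\delta(c\blacktriangleleft g)$ at $g$; $\pi_2(g,c)=c$. For posets $X,Y$, a map $f:X\to Y$ is monotonic if $x\preceq x'$ implies $f(x)\preceq f(x')$; for monotonic $f,f':X\to Y$, $f\Rightarrow f'$ iff $f(x)\preceq f'(x)$ for all $x\in X$. Given posets $A,B,C$ and monotonic $i:A\to B$, $f:A\to C$, a monotonic $g:B\to C$ is the left Kan extension of $f$ along $i$ if it is the $\Rightarrow$-minimum of $\{h:B\to C \text{ monotonic}\mid f\Rightarrow h\circ i\}$, and the right Kan extension if it is the $\Rightarrow$-maximum of $\{h:B\to C\text{ monotonic}\mid h\circ i\Rightarrow f\}$. *)

theory Defs
  imports Main
begin

text \<open>Group G: a type of class group_add (group operation written +, not assumed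
commutative).
The order on Conf is map_le.\<close>

type_synonym ('g, 'q) conf = "'g \<Rightarrow> 'q option"

definition lshift :: "('g::group_add, 'q) conf \<Rightarrow> 'g \<Rightarrow> ('g, 'q) conf" where
  "lshift c g = (\<lambda>h. c (g + h))"

definition translate :: "'g::group_add \<Rightarrow> 'g set \<Rightarrow> 'g set" where
  "translate g N = (\<lambda>n. g + n) ` N"

definition interior_N :: "'g::group_add set \<Rightarrow> 'g set \<Rightarrow> 'g set" where
  "interior_N N S = {g. translate g N \<subseteq> S}"

definition Phi :: "'g::group_add set \<Rightarrow> (('g, 'q) conf \<Rightarrow> 'q) \<Rightarrow> ('g, 'q) conf \<Rightarrow> ('g, 'q) conf" where
  "Phi N \<delta> c = (\<lambda>g. if g \<in> interior_N N (dom c) then Some (\<delta> (lshift c g |` N)) else None)"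

text \<open>Loc = union over g of {g} \<times> Q^(g\<cdot>N), with the trivial (equality) order.\<close>
definition Loc :: "'g::group_add set \<Rightarrow> ('g \<times> ('g, 'q) conf) set" where
  "Loc N = {(g, c). dom c = translate g N}"

definition delta_bar :: "'g::group_add set \<Rightarrow> (('g, 'q) conf \<Rightarrow> 'q) \<Rightarrow> 'g \<times> ('g, 'q) conf \<Rightarrow> ('g, 'q) conf" where
  "delta_bar N \<delta> x = [fst x \<mapsto> \<delta> (lshift (snd x) (fst x))]"

definition monotonic_on :: "'a set \<Rightarrow> ('a \<Rightarrow> 'a \<Rightarrow> bool) \<Rightarrow> 'b set \<Rightarrow> ('b \<Rightarrow> 'b \<Rightarrow> bool) \<Rightarrow> ('a \<Rightarrow> 'b) \<Rightarrow> bool" where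
  "monotonic_on X leX Y leY f \<longleftrightarrow> f ` X \<subseteq> Y \<and> (\<forall>x\<in>X. \<forall>x'\<in>X. leX x x' \<longrightarrow> leY (f x) (f x'))"

definition nat_le :: "'a set \<Rightarrow> ('b \<Rightarrow> 'b \<Rightarrow> bool) \<Rightarrow> ('a \<Rightarrow> 'b) \<Rightarrow> ('a \<Rightarrow> 'b) \<Rightarrow> bool" where
  "nat_le X leY f f' \<longleftrightarrow> (\<forall>x\<in>X. leY (f x) (f' x))"

definition is_left_kan_ext ::
  "'a set \<Rightarrow> ('a \<Rightarrow> 'a \<Rightarrow> bool) \<Rightarrow> 'b set \<Rightarrow> ('b \<Rightarrow> 'b \<Rightarrow> bool) \<Rightarrow> 'c set \<Rightarrow> ('c \<Rightarrow> 'c \<Rightarrow> bool)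
   \<Rightarrow> ('a \<Rightarrow> 'b) \<Rightarrow> ('a \<Rightarrow> 'c) \<Rightarrow> ('b \<Rightarrow> 'c) \<Rightarrow> bool" where
  "is_left_kan_ext A leA B leB C leC i f g \<longleftrightarrow>
     monotonic_on B leB C leC g \<and> nat_le A leC f (g \<circ> i) \<and>
     (\<forall>h. monotonic_on B leB C leC h \<and> nat_le A leC f (h \<circ> i) \<longrightarrow> nat_le B leC g h)"

end

theory Submission
  imports Defs
begin

text \<open>\<open>\<Phi> c\<close> at \<open>g\<close> only reads \<open>c\<close> on \<open>g\<cdot>N\<close>, and the restriction of \<open>c\<close> to \<open>g\<cdot>N\<close> is a local
  configuration \<open>(g, c\<restriction>g\<cdot>N) \<in> Loc\<close> whose \<open>\<delta>\<close>-value at \<open>g\<close> is exactly \<open>\<Phi> c g\<close>. Hence \<open>\<Phi>\<close> is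
  monotonic and extends \<open>\<delta>\<close>; and any monotonic \<open>F\<close> extending \<open>\<delta>\<close> must already be defined at \<open>g\<close>
  on \<open>c\<restriction>g\<cdot>N \<preceq> c\<close>, with that value, so monotonicity forces \<open>F c g = \<Phi> c g\<close>.\<close>

lemma add_mem_translate_iff: "g + h \<in> translate g N \<longleftrightarrow> h \<in> (N :: 'g::group_add set)"
  unfolding translate_def by auto

lemma lshift_restrict_translate: "lshift (c |` translate g N) g = lshift c g |` N"
  unfolding lshift_def restrict_map_def by (auto simp: add_mem_translate_iff)

lemma lshift_restrict_eq_if_dom_translate:
  assumes "dom c = translate g N"
  shows "lshift c g |` N = lshift c g"
proof
  fix h
  show "(lshift c g |` N) h = lshift c g h"
  proof (cases "h \<in> N")
    case False
    then have "g + h \<notin> dom c" using assms add_mem_translate_iff[of g h N] by simp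
    with False show ?thesis unfolding lshift_def restrict_map_def by (simp add: domIff)
  qed simp
qed

lemma lshift_restrict_eq_if_interior:
  assumes "g \<in> interior_N N (dom c)" and "c \<subseteq>\<^sub>m c'"
  shows "lshift c g |` N = lshift c' g |` N"
proof
  fix h
  show "(lshift c g |` N) h = (lshift c' g |` N) h"
  proof (cases "h \<in> N")
    case True
    then have "g + h \<in> dom c" using assms(1) unfolding interior_N_def translate_def by auto
    with True assms(2) show ?thesis unfolding lshift_def map_le_def by auto
  qed simp
qed

lemma dom_Phi: "dom (Phi N \<delta> c) = interior_N N (dom c)"
  unfolding Phi_def by (auto split: if_splits)

lemma Phi_mono:
  assumes "c \<subseteq>\<^sub>m c'"
  shows "Phi N \<delta> c \<subseteq>\<^sub>m Phi N \<delta> c'"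
  unfolding map_le_def
proof
  fix g
  assume "g \<in> dom (Phi N \<delta> c)"
  then have g: "g \<in> interior_N N (dom c)" by (simp add: dom_Phi)
  moreover have "g \<in> interior_N N (dom c')"
    using g map_le_implies_dom_le[OF assms] unfolding interior_N_def by auto
  ultimately show "Phi N \<delta> c g = Phi N \<delta> c' g"
    using lshift_restrict_eq_if_interior[OF g assms] unfolding Phi_def by simp
qed

lemma delta_bar_le_Phi:
  assumes "x \<in> Loc N"
  shows "delta_bar N \<delta> x \<subseteq>\<^sub>m Phi N \<delta> (snd x)"
proof -
  obtain g c where x: "x = (g, c)" and dom_c: "dom c = translate g N"
    using assms unfolding Loc_def by auto
  have "g \<in> interior_N N (dom c)" using dom_c unfolding interior_N_def by simp
  with lshift_restrict_eq_if_dom_translate[OF dom_c] show ?thesis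
    unfolding x delta_bar_def Phi_def map_le_def by simp
qed

lemma Phi_le_if_delta_bar_le:
  assumes mono_F: "\<And>c c'. c \<subseteq>\<^sub>m c' \<Longrightarrow> F c \<subseteq>\<^sub>m F c'"
    and delta_bar_le_F: "\<And>x. x \<in> Loc N \<Longrightarrow> delta_bar N \<delta> x \<subseteq>\<^sub>m F (snd x)"
  shows "Phi N \<delta> c \<subseteq>\<^sub>m F c"
  unfolding map_le_def
proof
  fix g
  assume "g \<in> dom (Phi N \<delta> c)"
  then have g: "g \<in> interior_N N (dom c)" by (simp add: dom_Phi)
  define c0 where "c0 = c |` translate g N"
  have "dom c0 = translate g N" using g unfolding c0_def interior_N_def by auto
  then have "delta_bar N \<delta> (g, c0) \<subseteq>\<^sub>m F c0" using delta_bar_le_F unfolding Loc_def by fastforce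
  then have F_c0: "F c0 g = Some (\<delta> (lshift c g |` N))"
    unfolding delta_bar_def map_le_def c0_def by (simp add: lshift_restrict_translate)
  have "c0 \<subseteq>\<^sub>m c" unfolding c0_def map_le_def by auto
  then have "F c g = F c0 g" using mono_F F_c0 unfolding map_le_def by (metis domI)
  with F_c0 g show "Phi N \<delta> c g = F c g" unfolding Phi_def by simp
qed

theorem mainTheorem9:
  fixes N :: "'g::group_add set" and \<delta> :: "('g \<Rightarrow> 'q::finite option) \<Rightarrow> 'q"
  shows "is_left_kan_ext (Loc N) (=) UNIV map_le UNIV map_le snd (delta_bar N \<delta>) (Phi N \<delta>)"
  unfolding is_left_kan_ext_def
proof (intro conjI allI impI)
  show "monotonic_on UNIV (\<subseteq>\<^sub>m) UNIV (\<subseteq>\<^sub>m) (Phi N \<delta>)"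
    unfolding monotonic_on_def by (simp add: Phi_mono)
  show "nat_le (Loc N) (\<subseteq>\<^sub>m) (delta_bar N \<delta>) (Phi N \<delta> \<circ> snd)"
    unfolding nat_le_def by (simp add: delta_bar_le_Phi)
next
  fix F
  assume "monotonic_on UNIV (\<subseteq>\<^sub>m) UNIV (\<subseteq>\<^sub>m) F \<and> nat_le (Loc N) (\<subseteq>\<^sub>m) (delta_bar N \<delta>) (F \<circ> snd)"
  then show "nat_le UNIV (\<subseteq>\<^sub>m) (Phi N \<delta>) F"
    unfolding monotonic_on_def nat_le_def by (simp add: Phi_le_if_delta_bar_le)
qed

end
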